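(* Let $x\in\mathbb{R}_{>0}$. There is no atomic restaking network $G=(V,S,\sigma,w,\theta,\pi)$ satisfying all three of the following conditions: (1) $\sum_{v\in V}\sigma(v) < x\cdot |S|$; (2) for every service $s\in S$, $\sum_{v\in V} w(v,s)=x$; (3) for every service $s\in S$, in the network $G_1=(V,S_1,\sigma_1,w_1,\theta_1,\pi_1)=G\searrow\{s\}$ obtained when the single service $s$ is Byzantine, every remaining service $s'\in S\setminus\{s\}$ satisfies $\sum_{v\in V} w_1(v,s')=x$.
   Context: A restaking network is a tuple $G=(V,S,\sigma,w,\theta,\pi)$ where $V$ is a finite nonempty set of validators, $S$ is a finite set of services, $\sigma:V\to\mathbb{R}_{>0}$ is the stake, $w:V\times S\to\mathbb{R}_{\ge 0}$ is the allocation with $w(v,s)\le\sigma(v)$ for all $v,s$, $\theta:S\to[0,1]$ is the attack threshold and $\pi:S\to\mathbb{R}_{>0}$ is the attack prize. The network is atomic if $w(v,s)\in\{0,\sigma(v)\}$ for all $v\in V$, $s\in S$. Byzantine transition: for $S^B\subseteq S$, the network $G\searrow S^B=(V,S_1,\sigma_1,w_1,\theta_1,\pi_1)$ is defined by $S_1=S\setminus S^B$, $\sigma_1(v)=\max\bigl(0,\sigma(v)-\sum_{s\in S^B}w(v,s)\bigr)$, $w_1(v,s)=\min(w(v,s),\sigma_1(v))$ for $s\in S_1$, and $\theta_1,\pi_1$ the restrictions of $\theta,\pi$ to $S_1$. *)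

theory Defs
  imports Main Complex_Main
begin

record ('v, 's) rnet =
  vals  :: "'v set"
  servs :: "'s set"
  stake :: "'v \<Rightarrow> real"
  alloc :: "'v \<Rightarrow> 's \<Rightarrow> real"
  thr   :: "'s \<Rightarrow> real"
  prize :: "'s \<Rightarrow> real"

definition restaking_network :: "('v, 's) rnet \<Rightarrow> bool" where
  "restaking_network G \<longleftrightarrow>
     finite (vals G) \<and> vals G \<noteq> {} \<and> finite (servs G) \<and>
     (\<forall>v\<in>vals G. stake G v > 0) \<and>
     (\<forall>v\<in>vals G. \<forall>s\<in>servs G. 0 \<le> alloc G v s \<and> alloc G v s \<le> stake G v) \<and>
     (\<forall>s\<in>servs G. 0 \<le> thr G s \<and> thr G s \<le> 1) \<and>
     (\<forall>s\<in>servs G. prize G s > 0)"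

definition atomic :: "('v, 's) rnet \<Rightarrow> bool" where
  "atomic G \<longleftrightarrow> (\<forall>v\<in>vals G. \<forall>s\<in>servs G. alloc G v s = 0 \<or> alloc G v s = stake G v)"

definition byz :: "('v, 's) rnet \<Rightarrow> 's set \<Rightarrow> ('v, 's) rnet" where
  "byz G SB =
     (let S1 = servs G - SB;
          sig1 = (\<lambda>v. max 0 (stake G v - (\<Sum>s\<in>SB. alloc G v s)))
      in \<lparr> vals = vals G, servs = S1, stake = sig1,
           alloc = (\<lambda>v s. min (alloc G v s) (sig1 v)),
           thr = thr G, prize = prize G \<rparr>)"

end

theory Submission
  imports Defs
begin

text \<open>In an atomic network each service s is backed by the set of validators that put their
  whole stake on it, so condition (2) says each such set has stake x. If s turns Byzantine, its
  backers are slashed to zero and drop out of every other service s'; condition (3) then forces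
  them to have contributed nothing to s', i.e. the backer sets of distinct services are
  disjoint. Disjoint sets of stake x each need total stake at least x |S|, contradicting (1).\<close>

definition backers :: "('v, 's) rnet \<Rightarrow> 's \<Rightarrow> 'v set" where
  "backers G s = {v \<in> vals G. alloc G v s = stake G v}"

lemma backers_subset_vals: "backers G s \<subseteq> vals G"
  by (auto simp: backers_def)

lemma vals_byz [simp]: "vals (byz G SB) = vals G"
  and servs_byz [simp]: "servs (byz G SB) = servs G - SB"
  by (simp_all add: byz_def Let_def)

lemma atomic_alloc_not_backer:
  assumes "atomic G" "v \<in> vals G" "s \<in> servs G" "v \<notin> backers G s"
  shows "alloc G v s = 0"
  using assms by (auto simp: atomic_def backers_def)

lemma atomic_total_alloc_eq_backers_stake:
  assumes "restaking_network G" "atomic G" "s \<in> servs G"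
  shows "(\<Sum>v\<in>vals G. alloc G v s) = sum (stake G) (backers G s)"
proof -
  have "(\<Sum>v\<in>vals G. alloc G v s) = (\<Sum>v\<in>vals G. if v \<in> backers G s then stake G v else 0)"
    using atomic_alloc_not_backer[OF assms(2) _ assms(3)]
    by (intro sum.cong) (auto simp: backers_def)
  also have "\<dots> = sum (stake G) (backers G s)"
    using assms(1) by (simp add: sum.If_cases restaking_network_def backers_def Int_def)
  finally show ?thesis .
qed

lemma alloc_byz:
  "alloc (byz G SB) v s' = min (alloc G v s') (max 0 (stake G v - (\<Sum>s\<in>SB. alloc G v s)))"
  by (simp add: byz_def Let_def)

lemma alloc_byz_single:
  assumes "restaking_network G" "atomic G" "s \<in> servs G" "s' \<in> servs G" "v \<in> vals G"
  shows "alloc (byz G {s}) v s' = (if v \<in> backers G s then 0 else alloc G v s')"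
proof -
  have "0 \<le> alloc G v s'" "alloc G v s' \<le> stake G v" "0 < stake G v"
    using assms by (auto simp: restaking_network_def)
  moreover have "alloc G v s = (if v \<in> backers G s then stake G v else 0)"
    using assms atomic_alloc_not_backer[OF assms(2,5,3)] by (auto simp: backers_def)
  ultimately show ?thesis
    by (simp add: alloc_byz)
qed

lemma backers_disjoint_if_byz_preserves_alloc:
  assumes G: "restaking_network G" "atomic G"
    and s: "s \<in> servs G" and s': "s' \<in> servs G" "s' \<noteq> s"
    and before: "(\<Sum>v\<in>vals G. alloc G v s') = x"
    and after: "(\<Sum>v\<in>vals (byz G {s}). alloc (byz G {s}) v s') = x"
  shows "backers G s \<inter> backers G s' = {}"
proof -
  let ?A = "backers G s"
  have fin: "finite (vals G)" and pos: "\<And>v. v \<in> vals G \<Longrightarrow> stake G v > 0"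
    and nonneg: "\<And>v. v \<in> vals G \<Longrightarrow> 0 \<le> alloc G v s'"
    using G s' by (auto simp: restaking_network_def)
  have sub: "?A \<subseteq> vals G"
    by (rule backers_subset_vals)
  have "(\<Sum>v\<in>vals (byz G {s}). alloc (byz G {s}) v s')
        = (\<Sum>v\<in>vals G. if v \<in> ?A then 0 else alloc G v s')"
    using alloc_byz_single[OF G s s'(1)] by (intro sum.cong) auto
  also have "\<dots> = (\<Sum>v\<in>vals G - ?A. alloc G v s')"
    using fin by (simp add: sum.If_cases Diff_eq)
  finally have "(\<Sum>v\<in>vals G - ?A. alloc G v s') = x"
    using after by simp
  then have "(\<Sum>v\<in>?A. alloc G v s') = 0"
    using before sum.subset_diff[OF sub fin, of "\<lambda>v. alloc G v s'"] by simp
  then have zero: "\<forall>v\<in>?A. alloc G v s' = 0"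
    using sub nonneg by (subst (asm) sum_nonneg_eq_0_iff[OF rev_finite_subset[OF fin sub]]) auto
  have "v \<notin> backers G s'" if "v \<in> ?A" for v
  proof -
    have "v \<in> vals G"
      using that sub by blast
    then have "alloc G v s' \<noteq> stake G v"
      using zero that pos by fastforce
    then show ?thesis
      by (simp add: backers_def)
  qed
  then show ?thesis
    by blast
qed

lemma sum_disjoint_family_le:
  fixes f :: "'a \<Rightarrow> 'b :: ordered_comm_monoid_add"
  assumes "finite V" "finite I" "\<And>i. i \<in> I \<Longrightarrow> A i \<subseteq> V"
    and "\<And>i j. i \<in> I \<Longrightarrow> j \<in> I \<Longrightarrow> i \<noteq> j \<Longrightarrow> A i \<inter> A j = {}"
    and "\<And>v. v \<in> V \<Longrightarrow> 0 \<le> f v"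
  shows "(\<Sum>i\<in>I. sum f (A i)) \<le> sum f V"
proof -
  have "(\<Sum>i\<in>I. sum f (A i)) = sum f (\<Union>i\<in>I. A i)"
    using assms by (subst sum.UNION_disjoint) (auto intro: finite_subset)
  also have "\<dots> \<le> sum f V"
    using assms by (intro sum_mono2) auto
  finally show ?thesis .
qed

lemma total_stake_ge_if_byz_preserves_alloc:
  assumes G: "restaking_network G" "atomic G"
    and before: "\<forall>s\<in>servs G. (\<Sum>v\<in>vals G. alloc G v s) = x"
    and after: "\<forall>s\<in>servs G. \<forall>s'\<in>servs (byz G {s}).
                  (\<Sum>v\<in>vals (byz G {s}). alloc (byz G {s}) v s') = x"
  shows "x * real (card (servs G)) \<le> sum (stake G) (vals G)"
proof -
  have "x * real (card (servs G)) = (\<Sum>s\<in>servs G. sum (stake G) (backers G s))"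
    using before atomic_total_alloc_eq_backers_stake[OF G] by simp
  also have "\<dots> \<le> sum (stake G) (vals G)"
  proof (rule sum_disjoint_family_le)
    show "finite (vals G)" "finite (servs G)" "\<And>v. v \<in> vals G \<Longrightarrow> 0 \<le> stake G v"
      using G(1) by (auto simp: restaking_network_def less_imp_le)
    show "\<And>s. backers G s \<subseteq> vals G"
      by (rule backers_subset_vals)
    show "backers G s \<inter> backers G s' = {}"
      if "s \<in> servs G" "s' \<in> servs G" "s \<noteq> s'" for s s'
      using that before after by (intro backers_disjoint_if_byz_preserves_alloc[OF G]) auto
  qed
  finally show ?thesis .
qed

theorem mainTheorem1:
  fixes x :: real
  assumes "x > 0"
  shows "\<not> (\<exists>G :: ('v, 's) rnet.
            restaking_network G \<and> atomic G \<and>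
            (\<Sum>v\<in>vals G. stake G v) < x * real (card (servs G)) \<and>
            (\<forall>s\<in>servs G. (\<Sum>v\<in>vals G. alloc G v s) = x) \<and>
            (\<forall>s\<in>servs G. \<forall>s'\<in>servs (byz G {s}).
                (\<Sum>v\<in>vals (byz G {s}). alloc (byz G {s}) v s') = x))"
  using total_stake_ge_if_byz_preserves_alloc by (metis leD)

end
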